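(* Let $k\ge2$ and $\varepsilon>0$, and let $K$, the sets $C_x$ and the map $\Phi_\varepsilon$ be as defined in the context. Let $\mathbf{q}^\ast=\Phi_\varepsilon(\mathbf{U}_k)$, where $\mathbf{U}_k$ is the uniform distribution on $[k]$. Then $\|\mathbf{q}^\ast\|_2^2=O(1/K)$, with an absolute implied constant.
   Context: Generalised Hadamard Response with parameter $\varepsilon>0$ on $[k]$: $a=2^{\lfloor\log_2\min(e^{\varepsilon},2k)\rfloor}$, $b=2^{\lceil\log_2(k/a+1)\rceil}$, $K=ab$, $s=b/2$. Let $H_b$ be the $b\times b$ Sylvester Hadamard matrix and $P_b$ the $b\times b$ all-$(-1)$ matrix; $\bar H_{a,b}\in\{-1,1\}^{K\times K}$ is the $a\times a$ block matrix with $H_b$ on the diagonal blocks and $P_b$ in all off-diagonal blocks. The $a(b-1)\ge k$ rows of $\bar H_{a,b}$ that are not the first row of a diagonal copy of $H_b$ each have exactly $s$ entries $+1$; each $x\in[k]$ is mapped to a distinct such row, and $C_x\subseteq[K]$ is the set of columns where that row equals $+1$. For a distribution $\mathbf{p}$ on $[k]$, $\Phi_\varepsilon(\mathbf{p})$ is the distribution on $[K]$ given by $\Phi_\varepsilon(\mathbf{p})(y)=\frac{1}{se^\varepsilon+K-s}\big((e^\varepsilon-1)\sum_{x\in[k]}\mathbf{p}(x)\mathbf{1}\{y\in C_x\}+1\big)$. *)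

theory Defs
  imports Complex_Main
begin

definition ghr_a :: "nat \<Rightarrow> real \<Rightarrow> nat" where
  "ghr_a k \<epsilon> = 2 ^ nat \<lfloor>log 2 (min (exp \<epsilon>) (2 * real k))\<rfloor>"

definition ghr_b :: "nat \<Rightarrow> real \<Rightarrow> nat" where
  "ghr_b k \<epsilon> = 2 ^ nat \<lceil>log 2 (real k / real (ghr_a k \<epsilon>) + 1)\<rceil>"

definition ghr_K :: "nat \<Rightarrow> real \<Rightarrow> nat" where
  "ghr_K k \<epsilon> = ghr_a k \<epsilon> * ghr_b k \<epsilon>"

definition ghr_s :: "nat \<Rightarrow> real \<Rightarrow> nat" where
  "ghr_s k \<epsilon> = ghr_b k \<epsilon> div 2"

text \<open>Sylvester Hadamard matrix of size 2^n (0-indexed entries):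
  H_1 = [1], H_{2m} = [[H_m, H_m], [H_m, -H_m]].\<close>
fun sylvester :: "nat \<Rightarrow> nat \<Rightarrow> nat \<Rightarrow> int" where
  "sylvester 0 i j = 1"
| "sylvester (Suc n) i j =
     sylvester n (i mod 2 ^ n) (j mod 2 ^ n) * (if 2 ^ n \<le> i \<and> 2 ^ n \<le> j then -1 else 1)"

definition Hbar :: "nat \<Rightarrow> nat \<Rightarrow> nat \<Rightarrow> nat \<Rightarrow> int" where
  "Hbar a b i j = (if i div b = j div b
                   then sylvester (nat \<lceil>log 2 (real b)\<rceil>) (i mod b) (j mod b) else -1)"

text \<open>Admissible rows: not the first row of a diagonal copy of H_b.\<close>
definition ghr_rows :: "nat \<Rightarrow> real \<Rightarrow> nat set" where
  "ghr_rows k \<epsilon> = {i. i < ghr_K k \<epsilon> \<and> i mod ghr_b k \<epsilon> \<noteq> 0}"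

text \<open>C_x for an assignment row of elements of [k] to admissible rows.\<close>
definition ghr_C :: "nat \<Rightarrow> real \<Rightarrow> (nat \<Rightarrow> nat) \<Rightarrow> nat \<Rightarrow> nat set" where
  "ghr_C k \<epsilon> row x =
     {y. y < ghr_K k \<epsilon> \<and> Hbar (ghr_a k \<epsilon>) (ghr_b k \<epsilon>) (row x) y = 1}"

text \<open>Output distribution \<Phi>_\<epsilon>(p) on [K] = {0..<K}.\<close>
definition ghr_Phi :: "nat \<Rightarrow> real \<Rightarrow> (nat \<Rightarrow> nat) \<Rightarrow> (nat \<Rightarrow> real) \<Rightarrow> nat \<Rightarrow> real" where
  "ghr_Phi k \<epsilon> row p y =
     ((exp \<epsilon> - 1) * (\<Sum>x<k. p x * (if y \<in> ghr_C k \<epsilon> row x then 1 else 0)) + 1)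
     / (real (ghr_s k \<epsilon>) * exp \<epsilon> + real (ghr_K k \<epsilon>) - real (ghr_s k \<epsilon>))"

definition uniform_dist :: "nat \<Rightarrow> nat \<Rightarrow> real" where
  "uniform_dist k x = (if x < k then 1 / real k else 0)"

end

theory Submission
  imports Defs
begin

text \<open>All rows i with Hbar i y = 1 lie in the diagonal block of y, since off-diagonal blocks are
  constantly -1. An injective assignment therefore puts at most b elements x with y in C_x, so
  every coordinate of q* is at most ((e - 1) b / k + 1) / D with D = K + (e - 1) b / 2 the
  normalising denominator. As D dominates both K and (e - 1) b / 2, this is at most
  2 / k + 1 / K, and K = a b < 2 (k + a) \<le> 6 k turns it into 13 / K. Summing the squares of
  K such coordinates gives 169 / K.\<close>

lemma pow2_floor_log_le:
  fixes x :: real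
  assumes "x \<ge> 1"
  shows "(2::real) ^ nat \<lfloor>log 2 x\<rfloor> \<le> x"
proof -
  have "(2::real) ^ nat \<lfloor>log 2 x\<rfloor> = 2 powr real (nat \<lfloor>log 2 x\<rfloor>)"
    by (simp add: powr_realpow)
  also have "\<dots> \<le> 2 powr log 2 x"
    using assms by (intro powr_mono) auto
  also have "\<dots> = x"
    using assms by simp
  finally show ?thesis .
qed

lemma pow2_ceil_log_less:
  fixes x :: real
  assumes "x \<ge> 1"
  shows "(2::real) ^ nat \<lceil>log 2 x\<rceil> < 2 * x"
proof -
  have "(2::real) ^ nat \<lceil>log 2 x\<rceil> = 2 powr real (nat \<lceil>log 2 x\<rceil>)"
    by (simp add: powr_realpow)
  also have "\<dots> < 2 powr (log 2 x + 1)"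
    using assms ceiling_correct[of "log 2 x"] by (intro powr_less_mono) auto
  also have "\<dots> = 2 * x"
    using assms by (simp add: powr_add)
  finally show ?thesis .
qed

lemma ghr_a_ge_1: "1 \<le> ghr_a k \<epsilon>"
  by (simp add: ghr_a_def)

lemma ghr_a_le:
  assumes "k > 0" and "\<epsilon> \<ge> 0"
  shows "real (ghr_a k \<epsilon>) \<le> 2 * real k"
proof -
  have "min (exp \<epsilon>) (2 * real k) \<ge> 1"
    using assms by simp
  from pow2_floor_log_le[OF this] show ?thesis
    by (simp add: ghr_a_def)
qed

lemma ghr_b_less: "real (ghr_b k \<epsilon>) < 2 * (real k / real (ghr_a k \<epsilon>) + 1)"
  using pow2_ceil_log_less[of "real k / real (ghr_a k \<epsilon>) + 1"]
  by (simp add: ghr_b_def)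

lemma ghr_b_pos: "0 < ghr_b k \<epsilon>"
  by (simp add: ghr_b_def)

lemma ghr_b_even:
  assumes "k > 0"
  shows "even (ghr_b k \<epsilon>)"
proof -
  have "real k / real (ghr_a k \<epsilon>) > 0"
    using assms ghr_a_ge_1[of k \<epsilon>] by simp
  then have "log 2 (real k / real (ghr_a k \<epsilon>) + 1) > 0"
    by simp
  then have "nat \<lceil>log 2 (real k / real (ghr_a k \<epsilon>) + 1)\<rceil> \<noteq> 0"
    by linarith
  then show ?thesis
    by (simp add: ghr_b_def)
qed

lemma ghr_K_pos: "0 < ghr_K k \<epsilon>"
  using ghr_a_ge_1[of k \<epsilon>] ghr_b_pos[of k \<epsilon>] by (simp add: ghr_K_def)

lemma ghr_K_less:
  assumes "k > 0" and "\<epsilon> \<ge> 0"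
  shows "real (ghr_K k \<epsilon>) < 6 * real k"
proof -
  have a: "real (ghr_a k \<epsilon>) \<ge> 1"
    using ghr_a_ge_1[of k \<epsilon>] by simp
  have "real (ghr_K k \<epsilon>) < real (ghr_a k \<epsilon>) * (2 * (real k / real (ghr_a k \<epsilon>) + 1))"
    using a ghr_b_less[of k \<epsilon>] by (simp add: ghr_K_def)
  also have "\<dots> = 2 * real k + 2 * real (ghr_a k \<epsilon>)"
    using a by (simp add: field_simps)
  also have "\<dots> \<le> 6 * real k"
    using ghr_a_le[OF assms] by simp
  finally show ?thesis .
qed

lemma ghr_denominator_eq:
  assumes "k > 0"
  shows "real (ghr_s k \<epsilon>) * exp \<epsilon> + real (ghr_K k \<epsilon>) - real (ghr_s k \<epsilon>)
           = real (ghr_K k \<epsilon>) + (exp \<epsilon> - 1) * real (ghr_b k \<epsilon>) / 2"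
proof -
  have "real (ghr_s k \<epsilon>) = real (ghr_b k \<epsilon>) / 2"
    using ghr_b_even[OF assms, of \<epsilon>] by (auto simp: ghr_s_def elim!: evenE)
  then show ?thesis
    by (simp add: field_simps)
qed

lemma Hbar_eq_1_imp_same_block: "Hbar a b i j = 1 \<Longrightarrow> i div b = j div b"
  by (auto simp: Hbar_def split: if_splits)

lemma card_div_eq:
  fixes b :: nat
  assumes "b > 0"
  shows "card {i. i div b = q} = b"
proof -
  have "{i. i div b = q} = {q * b..<q * b + b}"
  proof (intro set_eqI iffI)
    fix i assume "i \<in> {i. i div b = q}"
    then show "i \<in> {q * b..<q * b + b}"
      using div_mult_mod_eq[of i b] mod_less_divisor[OF assms, of i] by auto
  next
    fix i assume "i \<in> {q * b..<q * b + b}"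
    then show "i \<in> {i. i div b = q}"
      by (auto intro: div_nat_eqI simp: algebra_simps)
  qed
  then show ?thesis
    by simp
qed

lemma card_ghr_C_hits_le:
  assumes "inj_on row {..<k}"
  shows "card {x \<in> {..<k}. y \<in> ghr_C k \<epsilon> row x} \<le> ghr_b k \<epsilon>"
proof -
  let ?b = "ghr_b k \<epsilon>" and ?M = "{x \<in> {..<k}. y \<in> ghr_C k \<epsilon> row x}"
  have "row ` ?M \<subseteq> {i. i div ?b = y div ?b}"
    by (auto simp: ghr_C_def dest: Hbar_eq_1_imp_same_block)
  moreover have "card {i. i div ?b = y div ?b} = ?b"
    using card_div_eq[OF ghr_b_pos] .
  ultimately have "card (row ` ?M) \<le> ?b"
    using ghr_b_pos[of k \<epsilon>] by (metis card_mono card_ge_0_finite)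
  moreover have "card (row ` ?M) = card ?M"
    using assms by (intro card_image) (auto intro: inj_on_subset)
  ultimately show ?thesis
    by simp
qed

lemma sum_uniform_dist_indicator:
  "(\<Sum>x<k. uniform_dist k x * (if P x then 1 else 0)) = real (card {x \<in> {..<k}. P x}) / real k"
proof -
  have "(\<Sum>x<k. uniform_dist k x * (if P x then 1 else 0)) = (\<Sum>x<k. if P x then 1 / real k else 0)"
    by (intro sum.cong) (auto simp: uniform_dist_def)
  also have "\<dots> = (\<Sum>x\<in>{x \<in> {..<k}. P x}. 1 / real k)"
    by (simp only: sum.inter_filter[OF finite_lessThan])
  finally show ?thesis
    by simp
qed

lemma ghr_Phi_nonneg:
  assumes "\<epsilon> \<ge> 0" and "\<And>x. p x \<ge> 0"
  shows "0 \<le> ghr_Phi k \<epsilon> row p y"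
proof -
  have "real (ghr_s k \<epsilon>) * 1 \<le> real (ghr_s k \<epsilon>) * exp \<epsilon>"
    using assms(1) by (intro mult_left_mono) auto
  then show ?thesis
    using assms ghr_K_pos[of k \<epsilon>]
    by (auto simp: ghr_Phi_def intro!: divide_nonneg_pos add_nonneg_nonneg mult_nonneg_nonneg sum_nonneg)
qed

lemma ghr_Phi_uniform_le:
  assumes "k > 0" and "\<epsilon> \<ge> 0" and "inj_on row {..<k}"
  shows "ghr_Phi k \<epsilon> row (uniform_dist k) y \<le> 13 / real (ghr_K k \<epsilon>)"
proof -
  define K where "K = real (ghr_K k \<epsilon>)"
  define b where "b = real (ghr_b k \<epsilon>)"
  define c where "c = real (card {x \<in> {..<k}. y \<in> ghr_C k \<epsilon> row x})"
  define D where "D = K + (exp \<epsilon> - 1) * b / 2"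
  have K: "K > 0"
    using ghr_K_pos[of k \<epsilon>] by (simp add: K_def)
  have e: "exp \<epsilon> - 1 \<ge> 0"
    using assms(2) by simp
  have D_ge: "D \<ge> K" "D \<ge> (exp \<epsilon> - 1) * b / 2"
    using K e by (auto simp: D_def b_def)
  have Phi: "ghr_Phi k \<epsilon> row (uniform_dist k) y = ((exp \<epsilon> - 1) * (c / real k) + 1) / D"
    by (simp add: ghr_Phi_def sum_uniform_dist_indicator ghr_denominator_eq[OF assms(1)] c_def D_def K_def b_def)
  have "c \<le> b"
    using card_ghr_C_hits_le[OF assms(3), of y \<epsilon>] by (simp add: c_def b_def)
  then have "(exp \<epsilon> - 1) * (c / real k) \<le> (exp \<epsilon> - 1) * (b / real k)"
    using e by (intro mult_left_mono divide_right_mono) auto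
  also have "\<dots> = 2 / real k * ((exp \<epsilon> - 1) * b / 2)"
    by simp
  also have "\<dots> \<le> 2 / real k * D"
    using D_ge by (intro mult_left_mono) auto
  finally have "(exp \<epsilon> - 1) * (c / real k) \<le> 2 / real k * D" .
  moreover have "1 \<le> D / K"
    using D_ge K by simp
  ultimately have "(exp \<epsilon> - 1) * (c / real k) + 1 \<le> (2 / real k + 1 / K) * D"
    by (simp add: distrib_right)
  then have "ghr_Phi k \<epsilon> row (uniform_dist k) y \<le> 2 / real k + 1 / K"
    using D_ge K by (simp add: Phi pos_divide_le_eq)
  also have "\<dots> \<le> 13 / K"
    using ghr_K_less[OF assms(1,2)] K assms(1) by (simp add: K_def field_simps)
  finally show ?thesis
    by (simp add: K_def)
qed

lemma sum_squares_le_of_le_divide: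
  fixes f :: "nat \<Rightarrow> real"
  assumes "n > 0" and "\<And>y. y < n \<Longrightarrow> 0 \<le> f y" and "\<And>y. y < n \<Longrightarrow> f y \<le> c / real n"
  shows "(\<Sum>y<n. (f y)\<^sup>2) \<le> c\<^sup>2 / real n"
proof -
  have "(\<Sum>y<n. (f y)\<^sup>2) \<le> (\<Sum>y<n. (c / real n)\<^sup>2)"
    using assms(2,3) by (intro sum_mono power_mono) auto
  also have "\<dots> = c\<^sup>2 / real n"
    using assms(1) by (simp add: power2_eq_square)
  finally show ?thesis .
qed

theorem lemma4p5:
  shows "\<exists>c::real. \<forall>(k::nat) (\<epsilon>::real) (row::nat \<Rightarrow> nat).
     k \<ge> 2 \<longrightarrow> \<epsilon> > 0 \<longrightarrow> inj_on row {..<k} \<longrightarrow> row ` {..<k} \<subseteq> ghr_rows k \<epsilon> \<longrightarrow>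
     (\<Sum>y<ghr_K k \<epsilon>. (ghr_Phi k \<epsilon> row (uniform_dist k) y)\<^sup>2) \<le> c / real (ghr_K k \<epsilon>)"
proof (intro exI[of _ 169] allI impI)
  fix k :: nat and \<epsilon> :: real and row :: "nat \<Rightarrow> nat"
  assume "k \<ge> 2" and "\<epsilon> > 0" and inj: "inj_on row {..<k}"
  then have k: "k > 0" and \<epsilon>: "\<epsilon> \<ge> 0"
    by auto
  have "(\<Sum>y<ghr_K k \<epsilon>. (ghr_Phi k \<epsilon> row (uniform_dist k) y)\<^sup>2) \<le> 13\<^sup>2 / real (ghr_K k \<epsilon>)"
    using ghr_K_pos ghr_Phi_nonneg[OF \<epsilon>] ghr_Phi_uniform_le[OF k \<epsilon> inj]
    by (intro sum_squares_le_of_le_divide) (auto simp: uniform_dist_def)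
  then show "(\<Sum>y<ghr_K k \<epsilon>. (ghr_Phi k \<epsilon> row (uniform_dist k) y)\<^sup>2) \<le> 169 / real (ghr_K k \<epsilon>)"
    by simp
qed

end
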